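(* Consider the following class of dissipative quantum systems. A system consists of $N\ge1$ non-interacting subsystems; subsystem $K$ has $n_K\ge1$ system qubits and one ancilla qubit, labelled $i_j^K$, $j=0,\dots,n_K$ ($j=0$ the ancilla), with Hamiltonian $$H_K=\sum_{j_1=0}^{n_K}\sum_{j_2=j_1+1}^{n_K}J_K^{j_1,j_2}\big(X^{(i^K_{j_1})}X^{(i^K_{j_2})}+Y^{(i^K_{j_1})}Y^{(i^K_{j_2})}\big)+\sum_{j=0}^{n_K}\alpha Z^{(i^K_j)},$$ with real constants $J_K^{j_1,j_2},\alpha$, and a sampling time $\tau>0$. For input $u\in[0,1]$ define the CPTP map on the system qubits of subsystem $K$ by $T_K(u)\rho={\rm Tr}_{i_0^K}\big(e^{-iH_K\tau}(\rho\otimes\rho_{i_0}(u))e^{iH_K\tau}\big)$, where $\rho_{i_0}(u)=u|0\rangle\langle0|+(1-u)|1\rangle\langle1|$ and ${\rm Tr}_{i_0^K}$ is the partial trace over the ancilla. The overall dynamics is $\rho_k=T(u_k)\rho_{k-1}$ with $T(u)=\bigotimes_{K=1}^N T_K(u)$ acting on product states, and the output is $\bar y_k=h(\rho_k)$ where $h$ is a real polynomial (any degree, with constant term) in ${\rm Tr}(\rho_k Z^{(i)})$, $i=1,\dots,n$, ranging over all $n=\sum_K n_K$ system qubits. Let $\mathcal{M}_S$ be the set of filters induced by all such systems for which each $T_K$ satisfies: there is $0<\epsilon_K\le1$ with $\sup_{A\in H_0(2^{n_K}),A\ne0}\|T_K(u)A\|_2/\|A\|_2\le1-\epsilon_K$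 for all $u\in[0,1]$. Then for any null sequence $w$, the corresponding family of functionals $\mathcal{F}_S$ is dense in $C(K_1^-([0,1]),\|\cdot\|_w)$ (with respect to the supremum norm).
   Context: $X^{(q)},Y^{(q)},Z^{(q)}$ are the Pauli operators on qubit $q$. $H_0(m)$ is the space of traceless Hermitian $m\times m$ matrices and $\|\cdot\|_2$ the Schatten 2-norm. $K_1^-([0,1])$ is the set of real sequences $\{u_k\}_{k\le0}$ with $u_k\in[0,1]$. The filter induced by a system is $M(u)_k=h\big(\lim_{N\to\infty}T(u_k)T(u_{k-1})\cdots T(u_{k-N})\rho_{-N}\big)$ for bi-infinite input sequences $u$ with values in $[0,1]$ (limit independent of the density operators $\rho_{-N}$), and its functional is $F(u_-)=M(u)_0$ for any $u$ extending $u_-\in K_1^-([0,1])$. A null sequence is a decreasing $w:\{0,1,\dots\}\to(0,1]$ with $w_k\to0$; $\|u\|_w=\sup_{k\le0}|u_k|w_{-k}$; $C(K_1^-([0,1]),\|\cdot\|_w)$ is the set of real-valued functionals continuous with respect to $\|\cdot\|_w$. *)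

theory Defs
  imports "Jordan_Normal_Form.Matrix" Complex_Main
begin

text \<open>Matrices are Jordan_Normal_Form complex matrices. On m qubits the
 computational basis index i in [0, 2^m) encodes qubit q by bit q of i
 (bit value 0 = state |0>, 1 = state |1>).\<close>

definition bitv :: "nat \<Rightarrow> nat \<Rightarrow> bool" where
  "bitv q i = odd (i div 2 ^ q)"

definition flipq :: "nat \<Rightarrow> nat \<Rightarrow> nat" where
  "flipq q i = (if bitv q i then i - 2 ^ q else i + 2 ^ q)"

definition pauliX :: "nat \<Rightarrow> nat \<Rightarrow> complex mat" where
  "pauliX m q = mat (2 ^ m) (2 ^ m) (\<lambda>(r, c). if c = flipq q r then 1 else 0)"

definition pauliY :: "nat \<Rightarrow> nat \<Rightarrow> complex mat" where
  "pauliY m q = mat (2 ^ m) (2 ^ m)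
     (\<lambda>(r, c). if c = flipq q r then (if bitv q r then \<i> else - \<i>) else 0)"

definition pauliZ :: "nat \<Rightarrow> nat \<Rightarrow> complex mat" where
  "pauliZ m q = mat (2 ^ m) (2 ^ m)
     (\<lambda>(r, c). if r = c then (if bitv q r then -1 else 1) else 0)"

definition mtrace :: "complex mat \<Rightarrow> complex" where
  "mtrace A = (\<Sum>i<dim_row A. A $$ (i, i))"

definition mexp :: "complex mat \<Rightarrow> complex mat" where
  "mexp A = mat (dim_row A) (dim_col A)
     (\<lambda>(r, c). \<Sum>k. (A ^\<^sub>m k) $$ (r, c) / fact k)"

definition kron :: "complex mat \<Rightarrow> complex mat \<Rightarrow> complex mat" where
  "kron A B = mat (dim_row A * dim_row B) (dim_col A * dim_col B)
     (\<lambda>(r, c). A $$ (r div dim_row B, c div dim_col B) * B $$ (r mod dim_row B, c mod dim_col B))"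

text \<open>Partial trace over the last tensor factor, a single qubit (the ancilla).\<close>
definition ptrace_anc :: "complex mat \<Rightarrow> complex mat" where
  "ptrace_anc B = mat (dim_row B div 2) (dim_col B div 2)
     (\<lambda>(s, t). B $$ (2 * s, 2 * t) + B $$ (2 * s + 1, 2 * t + 1))"

definition anc_state :: "real \<Rightarrow> complex mat" where
  "anc_state u = mat 2 2 (\<lambda>(r, c). if r = 0 \<and> c = 0 then complex_of_real u
      else if r = 1 \<and> c = 1 then complex_of_real (1 - u) else 0)"

text \<open>Hamiltonian H_K of a subsystem with n system qubits (labels 1..n) and the
 ancilla (label 0), on n+1 qubits; the ancilla is the last tensor factor, so
 qubit j corresponds to bit j of the basis index of the n+1 qubit register.\<close>
definition hamK :: "nat \<Rightarrow> (nat \<Rightarrow> nat \<Rightarrow> real) \<Rightarrow> real \<Rightarrow> complex mat" where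
  "hamK n J \<alpha> = mat (2 ^ (n + 1)) (2 ^ (n + 1)) (\<lambda>(r, c).
     (\<Sum>j1\<in>{0..n}. \<Sum>j2\<in>{j1<..n}. complex_of_real (J j1 j2) *
        ((pauliX (n + 1) j1 * pauliX (n + 1) j2 + pauliY (n + 1) j1 * pauliY (n + 1) j2) $$ (r, c)))
     + (\<Sum>j\<in>{0..n}. complex_of_real \<alpha> * (pauliZ (n + 1) j $$ (r, c))))"

definition chanK :: "nat \<Rightarrow> (nat \<Rightarrow> nat \<Rightarrow> real) \<Rightarrow> real \<Rightarrow> real \<Rightarrow> real \<Rightarrow> complex mat \<Rightarrow> complex mat" where
  "chanK n J \<alpha> \<tau> u \<rho> =
     ptrace_anc (mexp ((- \<i> * complex_of_real \<tau>) \<cdot>\<^sub>m hamK n J \<alpha>) * kron \<rho> (anc_state u)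
                 * mexp ((\<i> * complex_of_real \<tau>) \<cdot>\<^sub>m hamK n J \<alpha>))"

definition hsnorm :: "complex mat \<Rightarrow> real" where
  "hsnorm A = sqrt (\<Sum>i<dim_row A. \<Sum>j<dim_col A. (cmod (A $$ (i, j)))\<^sup>2)"

definition hermitian_mat :: "nat \<Rightarrow> complex mat \<Rightarrow> bool" where
  "hermitian_mat d A \<longleftrightarrow> A \<in> carrier_mat d d \<and>
     (\<forall>i<d. \<forall>j<d. A $$ (j, i) = cnj (A $$ (i, j)))"

definition density :: "nat \<Rightarrow> complex mat \<Rightarrow> bool" where
  "density d \<rho> \<longleftrightarrow> \<rho> \<in> carrier_mat d d \<and> mtrace \<rho> = 1 \<and>
     (\<forall>x :: nat \<Rightarrow> complex.
        Im (\<Sum>i<d. \<Sum>j<d. cnj (x i) * \<rho> $$ (i, j) * x j) = 0 \<and>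
        Re (\<Sum>i<d. \<Sum>j<d. cnj (x i) * \<rho> $$ (i, j) * x j) \<ge> 0)"

text \<open>Condition on T_K: exists 0 < eps <= 1 with
 sup over nonzero traceless Hermitian A of ||T_K(u)A||_2/||A||_2 <= 1 - eps, for all u in [0,1]
 (the bound on the supremum written out as a bound on every quotient).\<close>
definition contractive_K :: "nat \<Rightarrow> (nat \<Rightarrow> nat \<Rightarrow> real) \<Rightarrow> real \<Rightarrow> real \<Rightarrow> bool" where
  "contractive_K n J \<alpha> \<tau> \<longleftrightarrow> (\<exists>\<epsilon>. 0 < \<epsilon> \<and> \<epsilon> \<le> 1 \<and>
     (\<forall>u\<in>{0..1}. \<forall>A. hermitian_mat (2 ^ n) A \<and> mtrace A = 0 \<and> A \<noteq> 0\<^sub>m (2 ^ n) (2 ^ n) \<longrightarrow>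
        hsnorm (chanK n J \<alpha> \<tau> u A) / hsnorm A \<le> 1 - \<epsilon>))"

text \<open>Left-infinite input sequences u_- in K_1^-([0,1]) are represented by
 v :: nat => real with v m = u_{-m}.\<close>
definition K1 :: "(nat \<Rightarrow> real) set" where
  "K1 = {v. \<forall>m. v m \<in> {0..1}}"

text \<open>Evolution T(u_0) T(u_{-1}) ... T(u_{-s}) rho for one subsystem.\<close>
definition evolve :: "(real \<Rightarrow> complex mat \<Rightarrow> complex mat) \<Rightarrow> (nat \<Rightarrow> real) \<Rightarrow> nat \<Rightarrow> complex mat \<Rightarrow> complex mat" where
  "evolve \<Phi> v s \<rho> = foldr (\<lambda>m acc. \<Phi> (v m) acc) [0..<Suc s] \<rho>"

text \<open>Tr(rho Z^(j)) for system qubit j (1 <= j <= n) of a subsystem, whose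
 system register has n qubits with qubit j at bit j-1.\<close>
definition zexp :: "nat \<Rightarrow> nat \<Rightarrow> complex mat \<Rightarrow> real" where
  "zexp n j \<rho> = Re (mtrace (\<rho> * pauliZ n (j - 1)))"

definition poly_out :: "nat \<Rightarrow> (nat \<Rightarrow> nat) \<Rightarrow> ((nat \<times> nat \<Rightarrow> nat) set) \<Rightarrow> ((nat \<times> nat \<Rightarrow> nat) \<Rightarrow> real)
    \<Rightarrow> (nat \<times> nat \<Rightarrow> real) \<Rightarrow> real" where
  "poly_out N nK Mons c x = (\<Sum>e\<in>Mons. c e * (\<Prod>K<N. \<Prod>j\<in>{1..nK K}. x (K, j) ^ e (K, j)))"

text \<open>F is the functional induced by the system: for every input u_- and every choice of
 (product) initial density operators rho_{-s}, the outputs h(T(u_0)...T(u_{-s}) rho_{-s})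
 converge to F(u_-).\<close>
definition sys_functional ::
  "nat \<Rightarrow> (nat \<Rightarrow> nat) \<Rightarrow> (nat \<Rightarrow> nat \<Rightarrow> nat \<Rightarrow> real) \<Rightarrow> real \<Rightarrow> real \<Rightarrow>
   ((nat \<times> nat \<Rightarrow> nat) set) \<Rightarrow> ((nat \<times> nat \<Rightarrow> nat) \<Rightarrow> real) \<Rightarrow> ((nat \<Rightarrow> real) \<Rightarrow> real) \<Rightarrow> bool" where
  "sys_functional N nK J \<alpha> \<tau> Mons c F \<longleftrightarrow>
     (\<forall>v\<in>K1. \<forall>\<rho>0 :: nat \<Rightarrow> nat \<Rightarrow> complex mat.
        (\<forall>s. \<forall>K<N. density (2 ^ nK K) (\<rho>0 s K)) \<longrightarrow>
        (\<lambda>s. poly_out N nK Mons c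
               (\<lambda>(K, j). zexp (nK K) j (evolve (chanK (nK K) (J K) \<alpha> \<tau>) v s (\<rho>0 s K))))
          \<longlonglongrightarrow> F v)"

definition FS :: "((nat \<Rightarrow> real) \<Rightarrow> real) set" where
  "FS = {F. \<exists>N nK J \<alpha> \<tau> Mons c. N \<ge> 1 \<and> (\<forall>K<N. nK K \<ge> 1) \<and> \<tau> > 0 \<and> finite Mons \<and>
          (\<forall>K<N. contractive_K (nK K) (J K) \<alpha> \<tau>) \<and>
          sys_functional N nK J \<alpha> \<tau> Mons c F}"

definition null_seq :: "(nat \<Rightarrow> real) \<Rightarrow> bool" where
  "null_seq w \<longleftrightarrow> (\<forall>k. w (Suc k) \<le> w k) \<and> (\<forall>k. 0 < w k \<and> w k \<le> 1) \<and> w \<longlonglongrightarrow> 0"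

definition wnorm :: "(nat \<Rightarrow> real) \<Rightarrow> (nat \<Rightarrow> real) \<Rightarrow> real" where
  "wnorm w v = (SUP m. \<bar>v m\<bar> * w m)"

definition cont_w :: "(nat \<Rightarrow> real) \<Rightarrow> ((nat \<Rightarrow> real) \<Rightarrow> real) \<Rightarrow> bool" where
  "cont_w w f \<longleftrightarrow> (\<forall>u\<in>K1. \<forall>e>0. \<exists>\<delta>>0. \<forall>v\<in>K1.
      wnorm w (\<lambda>m. v m - u m) < \<delta> \<longrightarrow> \<bar>f v - f u\<bar> < e)"

end

theory Submission
  imports Defs "HOL-Analysis.Analysis"
begin

(* A subsystem with one system qubit, alpha = 0, tau = 1 and coupling J = theta/2 partially swaps its
   qubit with the ancilla: T_K(u) acts on the Bloch z-component as z |-> q z + (1 - q)(2u - 1) with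
   q = cos^2 theta and damps traceless matrices by |cos theta|, so it is contractive for 0 < q < 1.
   Its filter is L_q(u) = sum_m (1 - q) q^m (2 u_{-m} - 1), whatever the initial states. Several such
   subsystems with a polynomial output realise every polynomial in finitely many L_q. These form an
   algebra of functions continuous on K_1^-, which is compact in the product topology, and continuity
   for a weighted norm implies continuity for that topology. The algebra contains the constants and
   separates points: L_q(u) - L_q(v) = 2(1 - q) sum_m (u_{-m} - v_{-m}) q^m is a bounded power series in
   q, which vanishes on (0,1) only if u = v. Stone-Weierstrass now gives density. *)

section \<open>One-qubit subsystems\<close>

lemma less_4_cases: "(i::nat) < 4 \<Longrightarrow> i = 0 \<or> i = 1 \<or> i = 2 \<or> i = 3"
  by auto

lemma less_2_cases: "(i::nat) < 2 \<Longrightarrow> i = 0 \<or> i = 1"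
  by auto

lemma sum_upto_4: "(\<Sum>k\<in>{0..<4::nat}. f k) = f 0 + f 1 + f 2 + f (3::nat)"
  by (simp add: numeral_eq_Suc atLeast0LessThan lessThan_Suc add_ac)

lemma sum_lessThan_2: "(\<Sum>k<2::nat. f k) = f 0 + f 1"
  by (simp add: numeral_eq_Suc lessThan_Suc add_ac)

lemma pauli_hopping_2:
  assumes "i < 4" "j < 4"
  shows "(pauliX 2 0 * pauliX 2 1 + pauliY 2 0 * pauliY 2 1) $$ (i, j) =
    (if (i = 1 \<and> j = 2) \<or> (i = 2 \<and> j = 1) then 2 else 0)"
  using assms
  by (auto dest!: less_4_cases simp: pauliX_def pauliY_def scalar_prod_def sum_upto_4 bitv_def flipq_def)

definition hop :: "complex \<Rightarrow> complex mat" where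
  "hop a = Matrix.mat 4 4 (\<lambda>(r, c). if (r = 1 \<and> c = 2) \<or> (r = 2 \<and> c = 1) then a else 0)"

lemma hop_dims [simp]: "dim_row (hop a) = 4" "dim_col (hop a) = 4"
  by (simp_all add: hop_def)

lemma smult_hop: "c \<cdot>\<^sub>m hop a = hop (c * a)"
  by (rule eq_matI) (auto simp: hop_def)

lemma hamK_single_qubit: "hamK 1 J 0 = hop (of_real (2 * J 0 1))"
proof -
  have ivl: "{0..Suc 0} = {0, Suc 0}" "{0<..Suc 0} = {Suc 0}" "{Suc 0<..Suc 0} = {}"
    and two: "Suc (Suc 0) = 2"
    by auto
  have "hamK 1 J 0 = Matrix.mat 4 4 (\<lambda>(r, c). of_real (J 0 1) *
      ((pauliX 2 0 * pauliX 2 1 + pauliY 2 0 * pauliY 2 1) $$ (r, c)))"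
    unfolding hamK_def by (simp add: ivl two del: index_mult_mat index_add_mat)
  also have "\<dots> = hop (of_real (2 * J 0 1))"
    by (rule eq_matI)
      (simp_all add: hop_def pauli_hopping_2[unfolded One_nat_def] del: index_mult_mat index_add_mat)
  finally show ?thesis .
qed

lemma hop_power:
  "hop a ^\<^sub>m k = Matrix.mat 4 4 (\<lambda>(r, c).
     if r = c \<and> (r = 0 \<or> r = 3) then (if k = 0 then 1 else 0)
     else if r = c then (if even k then a ^ k else 0)
     else if (r = 1 \<and> c = 2) \<or> (r = 2 \<and> c = 1) then (if odd k then a ^ k else 0) else 0)"
proof (induction k)
  case 0
  show ?case by (rule eq_matI) auto
next
  case (Suc k)
  show ?case
    unfolding pow_mat.simps Suc
    by (rule eq_matI) (simp_all add: hop_def scalar_prod_def sum_upto_4)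
qed

definition hop_exp :: "complex \<Rightarrow> complex mat" where
  "hop_exp a = Matrix.mat 4 4 (\<lambda>(r, c).
     if r = c \<and> (r = 0 \<or> r = 3) then 1
     else if r = c then cosh a
     else if (r = 1 \<and> c = 2) \<or> (r = 2 \<and> c = 1) then sinh a else 0)"

lemma mexp_hop: "mexp (hop a) = hop_exp a"
proof -
  have "(\<lambda>k. (if k = 0 then 1 else 0) / fact k :: complex) = (\<lambda>k. if k = 0 then 1 else 0)"
    by auto
  then have "(\<lambda>k. (if k = 0 then 1 else 0) / fact k :: complex) sums 1"
    using sums_single[of 0 "\<lambda>_. 1 :: complex"] by simp
  moreover have "(\<lambda>k. (if even k then a ^ k else 0) / fact k) sums cosh a"
  proof -
    have "(\<lambda>k. (if even k then a ^ k else 0) / fact k) = (\<lambda>k. if even k then a ^ k /\<^sub>R fact k else 0)"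
      by (auto simp: scaleR_conv_of_real divide_inverse mult.commute)
    then show ?thesis using cosh_converges[of a] by simp
  qed
  moreover have "(\<lambda>k. (if odd k then a ^ k else 0) / fact k) sums sinh a"
  proof -
    have "(\<lambda>k. (if odd k then a ^ k else 0) / fact k) = (\<lambda>k. if even k then 0 else a ^ k /\<^sub>R fact k)"
      by (auto simp: scaleR_conv_of_real divide_inverse mult.commute)
    then show ?thesis using sinh_converges[of a] by simp
  qed
  ultimately show ?thesis
    unfolding mexp_def hop_power
    by (intro eq_matI) (auto simp: hop_exp_def hop_def sums_iff)
qed

lemma ptrace_hop_exp_conj:
  assumes "\<rho> \<in> carrier_mat 2 2"
  shows "ptrace_anc (hop_exp b * kron \<rho> (anc_state u) * hop_exp (- b)) =
    Matrix.mat 2 2 (\<lambda>(s, t).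
      if s = 0 \<and> t = 0 then of_real u * \<rho> $$ (0, 0) + (cosh b)\<^sup>2 * of_real (1 - u) * \<rho> $$ (0, 0)
        - (sinh b)\<^sup>2 * of_real u * \<rho> $$ (1, 1)
      else if s = 1 \<and> t = 1 then of_real (1 - u) * \<rho> $$ (1, 1) + (cosh b)\<^sup>2 * of_real u * \<rho> $$ (1, 1)
        - (sinh b)\<^sup>2 * of_real (1 - u) * \<rho> $$ (0, 0)
      else cosh b * \<rho> $$ (s, t))"
  using assms
  apply (intro eq_matI)
    apply (simp_all add: ptrace_anc_def)
  apply (drule less_2_cases, drule less_2_cases)
  apply (elim disjE)
     apply (simp_all add: hop_exp_def kron_def anc_state_def scalar_prod_def sum_upto_4 power2_eq_square algebra_simps)
  done

definition relax_chan :: "real \<Rightarrow> real \<Rightarrow> complex mat \<Rightarrow> complex mat" where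
  "relax_chan \<theta> u \<rho> = Matrix.mat 2 2 (\<lambda>(s, t).
     if s = t then of_real ((cos \<theta>)\<^sup>2) * \<rho> $$ (s, s)
       + of_real ((sin \<theta>)\<^sup>2 * (if s = 0 then u else 1 - u)) * (\<rho> $$ (0, 0) + \<rho> $$ (1, 1))
     else of_real (cos \<theta>) * \<rho> $$ (s, t))"

lemma relax_chan_carrier [simp]: "relax_chan \<theta> u \<rho> \<in> carrier_mat 2 2"
  and relax_chan_dims [simp]: "dim_row (relax_chan \<theta> u \<rho>) = 2" "dim_col (relax_chan \<theta> u \<rho>) = 2"
  by (simp_all add: relax_chan_def)

lemma relax_chan_entries:
  "relax_chan \<theta> u \<rho> $$ (0, 0) =
     of_real ((cos \<theta>)\<^sup>2) * \<rho> $$ (0, 0) + of_real ((sin \<theta>)\<^sup>2 * u) * (\<rho> $$ (0, 0) + \<rho> $$ (1, 1))"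
  "relax_chan \<theta> u \<rho> $$ (1, 1) =
     of_real ((cos \<theta>)\<^sup>2) * \<rho> $$ (1, 1) + of_real ((sin \<theta>)\<^sup>2 * (1 - u)) * (\<rho> $$ (0, 0) + \<rho> $$ (1, 1))"
  "relax_chan \<theta> u \<rho> $$ (0, 1) = of_real (cos \<theta>) * \<rho> $$ (0, 1)"
  "relax_chan \<theta> u \<rho> $$ (1, 0) = of_real (cos \<theta>) * \<rho> $$ (1, 0)"
  by (simp_all add: relax_chan_def)

lemma chanK_single_qubit:
  assumes "\<rho> \<in> carrier_mat 2 2"
  shows "chanK 1 J 0 1 u \<rho> = relax_chan (2 * J 0 1) u \<rho>"
proof -
  define x where "x = 2 * J 0 1"
  have cos_sq: "complex_of_real (cos x) * complex_of_real (cos x) =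
      1 - complex_of_real (sin x) * complex_of_real (sin x)"
    by (metis cos_squared_eq of_real_1 of_real_diff of_real_mult power2_eq_square)
  have i_times_minus_i: "\<i> * (- \<i> * z) = z" for z :: complex
    by (simp add: mult.assoc[symmetric])
  have gen: "(- \<i> * complex_of_real 1) \<cdot>\<^sub>m hamK 1 J 0 = hop (- \<i> * of_real x)"
    "(\<i> * complex_of_real 1) \<cdot>\<^sub>m hamK 1 J 0 = hop (- (- \<i> * of_real x))"
    unfolding hamK_single_qubit smult_hop x_def by simp_all
  have "chanK 1 J 0 1 u \<rho> =
      ptrace_anc (hop_exp (- \<i> * x) * kron \<rho> (anc_state u) * hop_exp (- (- \<i> * x)))"
    unfolding chanK_def gen mexp_hop ..
  also have "\<dots> = relax_chan x u \<rho>"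
    unfolding ptrace_hop_exp_conj[OF assms] cosh_conv_cos sinh_conv_sin i_times_minus_i
    apply (rule eq_matI)
      apply simp_all
    apply (drule less_2_cases, drule less_2_cases)
    apply (elim disjE)
       apply (simp_all add: relax_chan_def cos_of_real sin_of_real power2_eq_square algebra_simps cos_sq)
    done
  finally show ?thesis by (simp add: x_def)
qed

section \<open>Output of a one-qubit subsystem\<close>

definition trace2 :: "complex mat \<Rightarrow> complex" where
  "trace2 \<rho> = \<rho> $$ (0, 0) + \<rho> $$ (1, 1)"

definition bloch_z :: "complex mat \<Rightarrow> real" where
  "bloch_z \<rho> = Re (\<rho> $$ (0, 0) - \<rho> $$ (1, 1))"

lemma trace2_relax_chan: "trace2 (relax_chan \<theta> u \<rho>) = trace2 \<rho>"
proof -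
  have "trace2 (relax_chan \<theta> u \<rho>) =
      trace2 \<rho> * ((complex_of_real (cos \<theta>))\<^sup>2 + (complex_of_real (sin \<theta>))\<^sup>2)"
    unfolding trace2_def relax_chan_entries by (simp add: algebra_simps)
  also have "(complex_of_real (cos \<theta>))\<^sup>2 + (complex_of_real (sin \<theta>))\<^sup>2 = 1"
    by (metis of_real_add of_real_power sin_cos_squared_add of_real_1 add.commute)
  finally show ?thesis by simp
qed

lemma bloch_z_relax_chan:
  assumes "trace2 \<rho> = 1"
  shows "bloch_z (relax_chan \<theta> u \<rho>) = (cos \<theta>)\<^sup>2 * bloch_z \<rho> + (1 - (cos \<theta>)\<^sup>2) * (2 * u - 1)"
proof -
  have "bloch_z (relax_chan \<theta> u \<rho>) = Re (of_real ((cos \<theta>)\<^sup>2) * (\<rho> $$ (0, 0) - \<rho> $$ (1, 1))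
      + of_real ((sin \<theta>)\<^sup>2 * (2 * u - 1)) * trace2 \<rho>)"
    unfolding bloch_z_def relax_chan_entries trace2_def by (simp add: algebra_simps)
  then show ?thesis
    using assms by (simp add: bloch_z_def sin_squared_eq)
qed

lemma zexp_single_qubit: "\<rho> \<in> carrier_mat 2 2 \<Longrightarrow> zexp 1 1 \<rho> = bloch_z \<rho>"
  by (simp add: zexp_def mtrace_def bloch_z_def pauliZ_def scalar_prod_def sum_lessThan_2 bitv_def
      numeral_eq_Suc atLeast0LessThan lessThan_Suc)

lemma density_qubit:
  assumes "Defs.density 2 \<rho>"
  shows "\<rho> \<in> carrier_mat 2 2" "trace2 \<rho> = 1" "\<bar>bloch_z \<rho>\<bar> \<le> 1"
proof -
  have "\<rho> \<in> carrier_mat 2 2" and "mtrace \<rho> = 1"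
    and psd: "\<And>x. Re (\<Sum>i<2. \<Sum>j<2. cnj (x i) * \<rho> $$ (i, j) * x j) \<ge> 0"
    using assms unfolding Defs.density_def by auto
  then show "\<rho> \<in> carrier_mat 2 2" and tr: "trace2 \<rho> = 1"
    by (simp_all add: mtrace_def trace2_def sum_lessThan_2)
  have "Re (\<rho> $$ (0, 0)) \<ge> 0" "Re (\<rho> $$ (1, 1)) \<ge> 0"
    using psd[of "\<lambda>i. if i = 0 then 1 else 0"] psd[of "\<lambda>i. if i = 1 then 1 else 0"]
    by (simp_all add: sum_lessThan_2)
  moreover have "Re (\<rho> $$ (0, 0)) + Re (\<rho> $$ (1, 1)) = 1"
    using arg_cong[OF tr, of Re] by (simp add: trace2_def)
  ultimately show "\<bar>bloch_z \<rho>\<bar> \<le> 1"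
    by (simp add: bloch_z_def)
qed

lemma evolve_0: "evolve \<Phi> v 0 \<rho> = \<Phi> (v 0) \<rho>"
  by (simp add: evolve_def)

lemma evolve_Suc: "evolve \<Phi> v (Suc s) \<rho> = evolve \<Phi> v s (\<Phi> (v (Suc s)) \<rho>)"
  by (simp add: evolve_def)

lemma evolve_cong_invariant:
  assumes "\<And>u \<rho>. \<rho> \<in> C \<Longrightarrow> \<Phi> u \<rho> = \<Psi> u \<rho>" "\<And>u \<rho>. \<rho> \<in> C \<Longrightarrow> \<Psi> u \<rho> \<in> C" "\<rho> \<in> C"
  shows "evolve \<Phi> v s \<rho> = evolve \<Psi> v s \<rho>"
  using assms(3)
proof (induction s arbitrary: \<rho>)
  case (Suc s)
  then show ?case using assms(1,2) by (simp add: evolve_Suc)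
qed (simp add: evolve_0 assms(1))

lemma evolve_invariant:
  assumes "\<And>u \<rho>. \<rho> \<in> C \<Longrightarrow> \<Phi> u \<rho> \<in> C" "\<rho> \<in> C"
  shows "evolve \<Phi> v s \<rho> \<in> C"
  using assms(2) by (induction s arbitrary: \<rho>) (simp_all add: evolve_0 evolve_Suc assms(1))

lemma bloch_z_evolve_relax_chan:
  assumes "trace2 \<rho> = 1"
  shows "bloch_z (evolve (relax_chan \<theta>) v s \<rho>) =
     (\<Sum>m\<le>s. (1 - (cos \<theta>)\<^sup>2) * ((cos \<theta>)\<^sup>2) ^ m * (2 * v m - 1)) + ((cos \<theta>)\<^sup>2) ^ Suc s * bloch_z \<rho>"
  using assms
proof (induction s arbitrary: \<rho>)
  case 0
  then show ?case by (simp add: evolve_0 bloch_z_relax_chan)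
next
  case (Suc s)
  have tr: "trace2 (relax_chan \<theta> (v (Suc s)) \<rho>) = 1"
    using Suc.prems by (simp add: trace2_relax_chan)
  show ?case
    unfolding evolve_Suc Suc.IH[OF tr] bloch_z_relax_chan[OF Suc.prems] by (simp add: algebra_simps)
qed

definition qubit_filter :: "real \<Rightarrow> (nat \<Rightarrow> real) \<Rightarrow> real" where
  "qubit_filter q v = (\<Sum>m. (1 - q) * q ^ m * (2 * v m - 1))"

lemma qubit_filter_term_bound:
  assumes "0 \<le> q" "q \<le> 1" "v \<in> K1"
  shows "norm ((1 - q) * q ^ m * (2 * v m - 1)) \<le> (1 - q) * q ^ m"
proof -
  have "\<bar>2 * v m - 1\<bar> \<le> 1"
    using assms(3) by (auto simp: K1_def abs_le_iff)
  then show ?thesis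
    using assms(1,2) by (simp add: abs_mult mult_left_le)
qed

lemma summable_qubit_filter:
  assumes "0 \<le> q" "q < 1" "v \<in> K1"
  shows "summable (\<lambda>m. (1 - q) * q ^ m * (2 * v m - 1))"
  using assms
  by (intro summable_comparison_test'[OF _ qubit_filter_term_bound] summable_mult summable_geometric)
    auto

lemma relax_chan_output_limit:
  assumes q: "(cos \<theta>)\<^sup>2 < 1" and v: "v \<in> K1" and \<rho>: "\<And>s. Defs.density 2 (\<rho>0 s)"
  shows "(\<lambda>s. zexp 1 1 (evolve (relax_chan \<theta>) v s (\<rho>0 s))) \<longlonglongrightarrow> qubit_filter ((cos \<theta>)\<^sup>2) v"
proof -
  define q where "q = (cos \<theta>)\<^sup>2"
  have q01: "0 \<le> q" "q < 1"
    using q by (simp_all add: q_def)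
  have output_eq: "zexp 1 1 (evolve (relax_chan \<theta>) v s (\<rho>0 s)) =
      (\<Sum>m\<le>s. (1 - q) * q ^ m * (2 * v m - 1)) + q ^ Suc s * bloch_z (\<rho>0 s)" for s
  proof -
    note \<rho>s = density_qubit[OF \<rho>[of s]]
    have "evolve (relax_chan \<theta>) v s (\<rho>0 s) \<in> carrier_mat 2 2"
      by (rule evolve_invariant) (simp_all add: \<rho>s)
    from zexp_single_qubit[OF this] show ?thesis
      unfolding bloch_z_evolve_relax_chan[OF \<rho>s(2)] q_def .
  qed
  have "(\<lambda>s. \<Sum>m\<le>s. (1 - q) * q ^ m * (2 * v m - 1)) \<longlonglongrightarrow> qubit_filter q v"
    unfolding qubit_filter_def using summable_qubit_filter[OF q01 v] by (rule summable_LIMSEQ')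
  moreover have "(\<lambda>s. q ^ Suc s * bloch_z (\<rho>0 s)) \<longlonglongrightarrow> 0"
  proof (rule Lim_null_comparison)
    show "\<forall>\<^sub>F s in sequentially. norm (q ^ Suc s * bloch_z (\<rho>0 s)) \<le> q ^ Suc s"
      using density_qubit(3)[OF \<rho>] q01 by (intro always_eventually allI) (simp add: abs_mult mult_left_le)
    show "(\<lambda>s. q ^ Suc s) \<longlonglongrightarrow> 0"
      using q01 by (intro LIMSEQ_Suc[OF LIMSEQ_power_zero]) simp
  qed
  ultimately show ?thesis
    unfolding output_eq q_def using tendsto_add by fastforce
qed

lemma hsnorm_relax_chan:
  assumes A: "A \<in> carrier_mat 2 2" and tr: "trace2 A = 0"
  shows "hsnorm (relax_chan \<theta> u A) \<le> \<bar>cos \<theta>\<bar> * hsnorm A"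
proof -
  define c where "c = (cos \<theta>)\<^sup>2"
  have c: "0 \<le> c" "c \<le> 1"
    by (simp_all add: c_def abs_square_le_1)
  define a where "a = (\<lambda>i j. (cmod (A $$ (i, j)))\<^sup>2)"
  have a: "a i j \<ge> 0" for i j
    by (simp add: a_def)
  have "A $$ (0, 0) + A $$ (1, 1) = 0"
    using tr by (simp add: trace2_def)
  then have "relax_chan \<theta> u A $$ (0, 0) = of_real c * A $$ (0, 0)"
    "relax_chan \<theta> u A $$ (1, 1) = of_real c * A $$ (1, 1)"
    by (simp_all add: relax_chan_entries relax_chan_entries[unfolded One_nat_def] c_def)
  then have "hsnorm (relax_chan \<theta> u A) = sqrt (c\<^sup>2 * a 0 0 + c * a 0 1 + c * a 1 0 + c\<^sup>2 * a 1 1)"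
    unfolding hsnorm_def a_def c_def
    by (simp add: sum_lessThan_2 relax_chan_entries(3,4)[unfolded One_nat_def] norm_mult norm_power
        power_mult_distrib flip: power_mult)
  also have "\<dots> \<le> sqrt (c * (a 0 0 + a 0 1 + a 1 0 + a 1 1))"
  proof -
    have "c\<^sup>2 * a i i \<le> c * a i i" for i
      using c a[of i i] by (intro mult_right_mono) (auto simp: power2_eq_square mult_left_le)
    from this[of 0] this[of 1] show ?thesis
      unfolding distrib_left by (intro real_sqrt_le_mono) linarith
  qed
  also have "\<dots> = \<bar>cos \<theta>\<bar> * hsnorm A"
    using A by (simp add: hsnorm_def sum_lessThan_2 a_def c_def real_sqrt_mult)
  finally show ?thesis .
qed

lemma cos_arccos_sqrt:
  assumes "0 \<le> q" "q \<le> 1"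
  shows "cos (arccos (sqrt q)) = sqrt q"
proof -
  have "0 \<le> sqrt q" "sqrt q \<le> 1"
    using assms by auto
  then show ?thesis
    by (intro cos_arccos) linarith+
qed

lemma contractive_single_qubit:
  assumes q: "0 < q" "q < 1"
  shows "contractive_K 1 (\<lambda>_ _. arccos (sqrt q) / 2) 0 1"
  unfolding contractive_K_def
proof (intro exI[of _ "1 - sqrt q"] conjI ballI allI impI)
  show "0 < 1 - sqrt q" "1 - sqrt q \<le> 1"
    using q by auto
  fix u A
  assume herm: "hermitian_mat (2 ^ 1) A \<and> mtrace A = 0 \<and> A \<noteq> 0\<^sub>m (2 ^ 1) (2 ^ 1)"
  then have A: "A \<in> carrier_mat 2 2"
    by (simp add: hermitian_mat_def)
  with herm have tr: "trace2 A = 0"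
    by (simp add: mtrace_def trace2_def sum_lessThan_2)
  have "chanK 1 (\<lambda>_ _. arccos (sqrt q) / 2) 0 1 u A = relax_chan (arccos (sqrt q)) u A"
    using chanK_single_qubit[OF A, of "\<lambda>_ _. arccos (sqrt q) / 2" u] by simp
  moreover have "hsnorm (relax_chan (arccos (sqrt q)) u A) \<le> sqrt q * hsnorm A"
    using hsnorm_relax_chan[OF A tr, of "arccos (sqrt q)" u] q by (simp add: cos_arccos_sqrt)
  moreover have "hsnorm A \<ge> 0"
    by (simp add: hsnorm_def sum_nonneg)
  ultimately show "hsnorm (chanK 1 (\<lambda>_ _. arccos (sqrt q) / 2) 0 1 u A) / hsnorm A \<le> 1 - (1 - sqrt q)"
    using q by (cases "hsnorm A = 0") (simp_all add: divide_le_eq)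
qed

lemma chanK_output_limit:
  assumes "(cos (2 * J 0 1))\<^sup>2 < 1" "v \<in> K1" "\<And>s. Defs.density 2 (\<rho>0 s)"
  shows "(\<lambda>s. zexp 1 1 (evolve (chanK 1 J 0 1) v s (\<rho>0 s))) \<longlonglongrightarrow> qubit_filter ((cos (2 * J 0 1))\<^sup>2) v"
proof -
  have "evolve (chanK 1 J 0 1) v s (\<rho>0 s) = evolve (relax_chan (2 * J 0 1)) v s (\<rho>0 s)" for s
    by (rule evolve_cong_invariant[where C = "carrier_mat 2 2"], erule chanK_single_qubit, simp,
        rule density_qubit(1)[OF assms(3)])
  then show ?thesis
    using relax_chan_output_limit[OF assms] by simp
qed

section \<open>Polynomial outputs of concatenated systems\<close>

lemma poly_out_image:
  assumes "finite I"
  shows "poly_out N nK (h ` I) (\<lambda>e. \<Sum>i\<in>{i\<in>I. h i = e}. c i) x =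
    (\<Sum>i\<in>I. c i * (\<Prod>K<N. \<Prod>j\<in>{1..nK K}. x (K, j) ^ h i (K, j)))"
  unfolding poly_out_def sum_distrib_right
  using sum.image_gen[OF assms, of "\<lambda>i. c i * (\<Prod>K<N. \<Prod>j\<in>{1..nK K}. x (K, j) ^ h i (K, j))" h]
  by simp

lemma poly_out_single_qubits:
  "poly_out N (\<lambda>_. 1) M c x = (\<Sum>e\<in>M. c e * (\<Prod>K<N. x (K, 1) ^ e (K, 1)))"
  by (simp add: poly_out_def)

lemma tendsto_poly_out:
  assumes "\<And>K j. K < N \<Longrightarrow> j \<in> {1..nK K} \<Longrightarrow> ((\<lambda>s. x s (K, j)) \<longlongrightarrow> y (K, j)) F"
  shows "((\<lambda>s. poly_out N nK M c (x s)) \<longlongrightarrow> poly_out N nK M c y) F"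
  unfolding poly_out_def using assms by (intro tendsto_intros) auto

definition concat_at :: "nat \<Rightarrow> (nat \<Rightarrow> 'a) \<Rightarrow> (nat \<Rightarrow> 'a) \<Rightarrow> nat \<Rightarrow> 'a" where
  "concat_at n f g k = (if k < n then f k else g (k - n))"

definition exp_concat :: "nat \<Rightarrow> (nat \<times> nat \<Rightarrow> nat) \<Rightarrow> (nat \<times> nat \<Rightarrow> nat) \<Rightarrow> nat \<times> nat \<Rightarrow> nat" where
  "exp_concat n e1 e2 = (\<lambda>(K, j). concat_at n (\<lambda>K. e1 (K, j)) (\<lambda>K. e2 (K, j)) K)"

lemma prod_lessThan_add:
  fixes f :: "nat \<Rightarrow> 'a::comm_monoid_mult"
  shows "(\<Prod>k<m + n. f k) = (\<Prod>k<m. f k) * (\<Prod>k<n. f (m + k))"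
  by (induction n) (simp_all add: mult.assoc)

lemma monomial_concat_at:
  "(\<Prod>K<N1 + N2. concat_at N1 X Y K ^ exp_concat N1 e1 e2 (K, j)) =
    (\<Prod>K<N1. X K ^ e1 (K, j)) * (\<Prod>K<N2. Y K ^ e2 (K, j))"
  unfolding prod_lessThan_add by (simp add: concat_at_def exp_concat_def)

lemma poly_out_concat_add:
  assumes "finite A" "finite B"
  obtains M c where "finite M" "\<And>X Y. poly_out (N + N') (\<lambda>_. 1) M c (\<lambda>(K, _). concat_at N X Y K) =
    poly_out N (\<lambda>_. 1) A a (\<lambda>(K, _). X K) + poly_out N' (\<lambda>_. 1) B b (\<lambda>(K, _). Y K)"
proof
  define h where "h = case_sum (\<lambda>e. exp_concat N e (\<lambda>_. 0)) (\<lambda>e. exp_concat N (\<lambda>_. 0) e)"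
  show "finite (h ` (A <+> B))"
    using assms by simp
  fix X Y :: "nat \<Rightarrow> real"
  show "poly_out (N + N') (\<lambda>_. 1) (h ` (A <+> B)) (\<lambda>e. \<Sum>i\<in>{i \<in> A <+> B. h i = e}. case_sum a b i)
      (\<lambda>(K, _). concat_at N X Y K) =
    poly_out N (\<lambda>_. 1) A a (\<lambda>(K, _). X K) + poly_out N' (\<lambda>_. 1) B b (\<lambda>(K, _). Y K)"
    unfolding poly_out_image[OF finite_Plus[OF assms]]
    unfolding poly_out_single_qubits
    using assms
    by (simp add: sum.Plus h_def monomial_concat_at[of _ _ _ _ "\<lambda>_. 0", simplified]
        monomial_concat_at[of _ _ _ "\<lambda>_. 0", simplified])
qed

lemma poly_out_concat_mult:
  assumes "finite A" "finite B"
  obtains M c where "finite M" "\<And>X Y. poly_out (N + N') (\<lambda>_. 1) M c (\<lambda>(K, _). concat_at N X Y K) =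
    poly_out N (\<lambda>_. 1) A a (\<lambda>(K, _). X K) * poly_out N' (\<lambda>_. 1) B b (\<lambda>(K, _). Y K)"
proof
  define h where "h = (\<lambda>(e1, e2). exp_concat N e1 e2)"
  show "finite (h ` (A \<times> B))"
    using assms by simp
  fix X Y :: "nat \<Rightarrow> real"
  show "poly_out (N + N') (\<lambda>_. 1) (h ` (A \<times> B))
      (\<lambda>e. \<Sum>i\<in>{i \<in> A \<times> B. h i = e}. a (fst i) * b (snd i)) (\<lambda>(K, _). concat_at N X Y K) =
    poly_out N (\<lambda>_. 1) A a (\<lambda>(K, _). X K) * poly_out N' (\<lambda>_. 1) B b (\<lambda>(K, _). Y K)"
    unfolding poly_out_image[OF finite_cartesian_product[OF assms]]
    unfolding poly_out_single_qubits sum_product sum.cartesian_product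
    by (intro sum.cong) (auto simp: h_def monomial_concat_at)
qed

definition qubit_poly_filter ::
    "nat \<Rightarrow> (nat \<Rightarrow> real) \<Rightarrow> (nat \<times> nat \<Rightarrow> nat) set \<Rightarrow> ((nat \<times> nat \<Rightarrow> nat) \<Rightarrow> real) \<Rightarrow> (nat \<Rightarrow> real) \<Rightarrow> real"
  where "qubit_poly_filter N qs M c v = poly_out N (\<lambda>_. 1) M c (\<lambda>(K, _). qubit_filter (qs K) v)"

lemma qubit_poly_filter_in_FS:
  assumes N: "1 \<le> N" and M: "finite M" and qs: "\<forall>K<N. qs K \<in> {0<..<1}"
  shows "qubit_poly_filter N qs M c \<in> FS"
proof -
  define J where "J = (\<lambda>K (_::nat) (_::nat). arccos (sqrt (qs K)) / 2)"
  have q: "(cos (2 * J K 0 1))\<^sup>2 = qs K" if "K < N" for K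
  proof -
    have "0 < qs K" "qs K < 1"
      using qs that by auto
    then show ?thesis
      by (simp add: J_def cos_arccos_sqrt)
  qed
  have "sys_functional N (\<lambda>_. 1) J 0 1 M c (qubit_poly_filter N qs M c)"
    unfolding sys_functional_def qubit_poly_filter_def
  proof (intro ballI allI impI tendsto_poly_out)
    fix v and \<rho>0 :: "nat \<Rightarrow> nat \<Rightarrow> complex mat" and K j :: nat
    assume "v \<in> K1" "\<forall>s. \<forall>K<N. Defs.density (2 ^ 1) (\<rho>0 s K)" "K < N" "j \<in> {1..1::nat}"
    then show "(\<lambda>s. case (K, j) of (K, j) \<Rightarrow> zexp 1 j (evolve (chanK 1 (J K) 0 1) v s (\<rho>0 s K)))
        \<longlonglongrightarrow> (case (K, j) of (K, _) \<Rightarrow> qubit_filter (qs K) v)"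
      using chanK_output_limit[of "J K" v "\<lambda>s. \<rho>0 s K"] q qs by simp
  qed
  moreover have "contractive_K 1 (J K) 0 1" if "K < N" for K
    unfolding J_def by (rule contractive_single_qubit) (use qs that in auto)
  ultimately show ?thesis
    unfolding FS_def using N M
    by (intro CollectI exI[of _ N] exI[of _ "\<lambda>_. 1"] exI[of _ J] exI[of _ 0] exI[of _ 1] exI[of _ M]
        exI[of _ c]) auto
qed

definition qubit_poly_filters :: "((nat \<Rightarrow> real) \<Rightarrow> real) set" where
  "qubit_poly_filters = {qubit_poly_filter N qs M c | N qs M c.
     1 \<le> N \<and> finite M \<and> (\<forall>K<N. qs K \<in> {0<..<1})}"

lemma qubit_poly_filters_subset_FS: "qubit_poly_filters \<subseteq> FS"
  unfolding qubit_poly_filters_def using qubit_poly_filter_in_FS by blast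

lemma qubit_poly_filter_concat_at:
  "qubit_poly_filter (N1 + N2) (concat_at N1 q1 q2) M c v =
    poly_out (N1 + N2) (\<lambda>_. 1) M c (\<lambda>(K, _). concat_at N1 (\<lambda>K. qubit_filter (q1 K) v) (\<lambda>K. qubit_filter (q2 K) v) K)"
  unfolding qubit_poly_filter_def
  by (rule arg_cong[of _ _ "poly_out (N1 + N2) (\<lambda>_. 1) M c"]) (auto simp: concat_at_def)

lemma qubit_poly_filters_closed:
  assumes "f \<in> qubit_poly_filters" "g \<in> qubit_poly_filters"
  shows "(\<lambda>v. f v + g v) \<in> qubit_poly_filters" "(\<lambda>v. f v * g v) \<in> qubit_poly_filters"
proof -
  obtain N1 q1 M1 c1 N2 q2 M2 c2 where
    fg: "f = qubit_poly_filter N1 q1 M1 c1" "g = qubit_poly_filter N2 q2 M2 c2"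
    and N: "1 \<le> N1 + N2" and M: "finite M1" "finite M2"
    and q: "\<forall>K<N1 + N2. concat_at N1 q1 q2 K \<in> {0<..<1}"
    using assms unfolding qubit_poly_filters_def concat_at_def by auto
  have concat_in: "qubit_poly_filter (N1 + N2) (concat_at N1 q1 q2) M c \<in> qubit_poly_filters"
    if "finite M" for M c
    unfolding qubit_poly_filters_def using N q that by auto
  obtain M c where "finite M" and add:
    "\<And>X Y. poly_out (N1 + N2) (\<lambda>_. 1) M c (\<lambda>(K, _). concat_at N1 X Y K) =
       poly_out N1 (\<lambda>_. 1) M1 c1 (\<lambda>(K, _). X K) + poly_out N2 (\<lambda>_. 1) M2 c2 (\<lambda>(K, _). Y K)"
    using poly_out_concat_add[OF M, where N = N1 and N' = N2 and a = c1 and b = c2] by blast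
  moreover have "(\<lambda>v. f v + g v) = qubit_poly_filter (N1 + N2) (concat_at N1 q1 q2) M c"
  proof
    fix v
    show "f v + g v = qubit_poly_filter (N1 + N2) (concat_at N1 q1 q2) M c v"
      unfolding qubit_poly_filter_concat_at add unfolding fg qubit_poly_filter_def ..
  qed
  ultimately show "(\<lambda>v. f v + g v) \<in> qubit_poly_filters"
    using concat_in by simp
  obtain M c where "finite M" and mult:
    "\<And>X Y. poly_out (N1 + N2) (\<lambda>_. 1) M c (\<lambda>(K, _). concat_at N1 X Y K) =
       poly_out N1 (\<lambda>_. 1) M1 c1 (\<lambda>(K, _). X K) * poly_out N2 (\<lambda>_. 1) M2 c2 (\<lambda>(K, _). Y K)"
    using poly_out_concat_mult[OF M, where N = N1 and N' = N2 and a = c1 and b = c2] by blast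
  moreover have "(\<lambda>v. f v * g v) = qubit_poly_filter (N1 + N2) (concat_at N1 q1 q2) M c"
  proof
    fix v
    show "f v * g v = qubit_poly_filter (N1 + N2) (concat_at N1 q1 q2) M c v"
      unfolding qubit_poly_filter_concat_at mult unfolding fg qubit_poly_filter_def ..
  qed
  ultimately show "(\<lambda>v. f v * g v) \<in> qubit_poly_filters"
    using concat_in by simp
qed

section \<open>Density via Stone-Weierstrass\<close>

lemma K1_abs_diff_le_1:
  assumes "x \<in> K1" "y \<in> K1"
  shows "\<bar>x m - y m\<bar> \<le> 1"
proof -
  have "x m \<in> {0..1}" "y m \<in> {0..1}"
    using assms by (auto simp: K1_def)
  then show ?thesis
    by auto
qed

lemma continuous_on_qubit_filter:
  assumes "0 \<le> q" "q < 1"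
  shows "continuous_on K1 (qubit_filter q)"
proof -
  have "uniform_limit K1 (\<lambda>n v. \<Sum>m<n. (1 - q) * q ^ m * (2 * v m - 1)) (qubit_filter q) sequentially"
    unfolding qubit_filter_def using assms
    by (intro Weierstrass_m_test[OF qubit_filter_term_bound] summable_mult summable_geometric) auto
  moreover have "continuous_on K1 (\<lambda>v. \<Sum>m<n. (1 - q) * q ^ m * (2 * v m - 1))" for n
    by (intro continuous_intros continuous_on_subset[OF continuous_on_product_coordinates]) simp
  ultimately show ?thesis
    by (intro uniform_limit_theorem) auto
qed

lemma continuous_on_qubit_poly_filter:
  assumes "\<forall>K<N. qs K \<in> {0<..<1}"
  shows "continuous_on K1 (qubit_poly_filter N qs M c)"
  unfolding qubit_poly_filter_def poly_out_single_qubits using assms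
  by (intro continuous_intros) (auto intro!: continuous_on_qubit_filter less_imp_le)

lemma compact_K1: "compact K1"
proof -
  have "K1 = PiE UNIV (\<lambda>_. {0..1})"
    by (auto simp: K1_def PiE_def extensional_def)
  moreover have "compactin (product_topology (\<lambda>_. euclidean) UNIV) (PiE UNIV (\<lambda>_::nat. {0..1::real}))"
    by (simp add: compactin_PiE compactin_euclidean_iff)
  ultimately show ?thesis
    by (simp add: euclidean_product_topology compactin_euclidean_iff)
qed

lemma wnorm_le_of_eventually_small:
  assumes w: "null_seq w" and "u \<in> K1" "v \<in> K1" "\<delta> > 0"
    and near: "\<And>m. m < M \<Longrightarrow> \<bar>v m - u m\<bar> < \<delta>" and tail: "\<And>m. M \<le> m \<Longrightarrow> w m < \<delta>"
  shows "wnorm w (\<lambda>m. v m - u m) \<le> \<delta>"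
  unfolding wnorm_def
proof (rule cSUP_least)
  fix m
  have "0 < w m" "w m \<le> 1"
    using w by (auto simp: null_seq_def)
  moreover have "\<bar>v m - u m\<bar> \<le> 1"
    using assms(3,2) by (rule K1_abs_diff_le_1)
  ultimately show "\<bar>v m - u m\<bar> * w m \<le> \<delta>"
    using near[of m] tail[of m] \<open>\<delta> > 0\<close>
    by (cases "m < M") (auto intro: order_trans[OF mult_left_le] order_trans[OF mult_left_le_one_le])
qed simp

lemma continuous_on_K1_if_cont_w:
  assumes w: "null_seq w" and f: "cont_w w f"
  shows "continuous_on K1 f"
  unfolding continuous_on_topological
proof (intro ballI allI impI)
  fix u B
  assume u: "u \<in> K1" and B: "open B" "f u \<in> B"
  obtain e where e: "e > 0" "ball (f u) e \<subseteq> B"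
    using B openE by blast
  obtain \<delta> where \<delta>: "\<delta> > 0" "\<And>v. v \<in> K1 \<Longrightarrow> wnorm w (\<lambda>m. v m - u m) < \<delta> \<Longrightarrow> \<bar>f v - f u\<bar> < e"
    using f u e(1) unfolding cont_w_def by blast
  have "\<forall>\<^sub>F m in sequentially. w m < \<delta> / 2"
    using w \<delta>(1) unfolding null_seq_def by (intro order_tendstoD(2)) auto
  then obtain M where M: "\<And>m. M \<le> m \<Longrightarrow> w m < \<delta> / 2"
    by (auto simp: eventually_sequentially)
  define A where "A = (\<Inter>m<M. (\<lambda>v. v m) -` ball (u m) (\<delta> / 2))"
  show "\<exists>A. open A \<and> u \<in> A \<and> (\<forall>v\<in>K1. v \<in> A \<longrightarrow> f v \<in> B)"
  proof (intro exI conjI ballI impI)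
    show "open A" "u \<in> A"
      unfolding A_def using \<delta>(1)
      by (auto intro!: open_INT open_vimage continuous_on_product_coordinates)
    fix v
    assume "v \<in> K1" "v \<in> A"
    have "wnorm w (\<lambda>m. v m - u m) \<le> \<delta> / 2"
    proof (rule wnorm_le_of_eventually_small[OF w u \<open>v \<in> K1\<close>])
      show "\<delta> / 2 > 0"
        using \<delta>(1) by simp
      show "\<bar>v m - u m\<bar> < \<delta> / 2" if "m < M" for m
        using \<open>v \<in> A\<close> that by (auto simp: A_def dist_real_def abs_minus_commute)
    qed (rule M)
    then have "\<bar>f v - f u\<bar> < e"
      using \<delta> \<open>v \<in> K1\<close> by simp
    then show "f v \<in> B"
      using e(2) by (auto simp: dist_real_def abs_minus_commute)
  qed
qed

lemma summable_bounded_powser: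
  fixes d :: "nat \<Rightarrow> real"
  assumes "\<And>n. \<bar>d n\<bar> \<le> B" "\<bar>x\<bar> < 1"
  shows "summable (\<lambda>n. d n * x ^ n)"
proof (rule summable_comparison_test')
  show "summable (\<lambda>n. B * \<bar>x\<bar> ^ n)"
    using assms(2) by (simp add: summable_geometric)
  show "norm (d n * x ^ n) \<le> B * \<bar>x\<bar> ^ n" for n
    using assms(1)[of n] by (simp add: abs_mult power_abs mult_right_mono)
qed

lemma bounded_powser_vanishing_at_right_0:
  fixes d :: "nat \<Rightarrow> real"
  assumes bound: "\<And>n. \<bar>d n\<bar> \<le> B" and vanish: "\<And>x. 0 < x \<Longrightarrow> x < 1 \<Longrightarrow> (\<Sum>n. d n * x ^ n) = 0"
  shows "d 0 = 0"
proof -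
  have "isCont (\<lambda>x. \<Sum>n. d n * x ^ n) 0"
    by (rule isCont_powser[of _ "1 / 2"]) (simp_all add: summable_bounded_powser[OF bound])
  then have lim: "((\<lambda>x. \<Sum>n. d n * x ^ n) \<longlongrightarrow> d 0) (at_right 0)"
    by (simp add: isCont_def filterlim_at_split)
  have "\<forall>\<^sub>F x in at_right 0. (\<Sum>n. d n * x ^ n) = (0::real)"
  proof (rule eventually_mono)
    show "\<forall>\<^sub>F x in at_right 0. x \<in> {0<..<1::real}"
      by (rule eventually_at_right_real) simp
  qed (simp add: vanish)
  from lim[unfolded tendsto_cong[OF this]] show ?thesis
    by (simp add: tendsto_const_iff)
qed

lemma bounded_powser_vanishing_imp_zero:
  fixes d :: "nat \<Rightarrow> real"
  assumes "\<And>n. \<bar>d n\<bar> \<le> B" "\<And>x. 0 < x \<Longrightarrow> x < 1 \<Longrightarrow> (\<Sum>n. d n * x ^ n) = 0"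
  shows "d n = 0"
  using assms
proof (induction n arbitrary: d)
  case 0
  then show ?case
    by (rule bounded_powser_vanishing_at_right_0)
next
  case (Suc n)
  have "(\<Sum>k. d (Suc k) * x ^ k) = 0" if "0 < x" "x < 1" for x
  proof -
    have "(\<Sum>k. d (Suc k) * x ^ k) * x = (\<Sum>k. d k * x ^ k) - d 0"
      using that by (intro powser_split_head(2) summable_bounded_powser[OF Suc.prems(1)]) simp
    then show ?thesis
      using that Suc.prems bounded_powser_vanishing_at_right_0[OF Suc.prems] by simp
  qed
  then show ?case
    using Suc.IH[of "\<lambda>k. d (Suc k)"] Suc.prems(1) by simp
qed

lemma qubit_filter_diff:
  assumes "0 \<le> q" "q < 1" "x \<in> K1" "y \<in> K1"
  shows "qubit_filter q x - qubit_filter q y = 2 * (1 - q) * (\<Sum>m. (x m - y m) * q ^ m)"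
proof -
  have "summable (\<lambda>m. (x m - y m) * q ^ m)"
    using assms by (intro summable_bounded_powser[of _ 1] K1_abs_diff_le_1) auto
  then have "2 * (1 - q) * (\<Sum>m. (x m - y m) * q ^ m) = (\<Sum>m. 2 * (1 - q) * ((x m - y m) * q ^ m))"
    by (rule suminf_mult[symmetric])
  also have "\<dots> = (\<Sum>m. (1 - q) * q ^ m * (2 * x m - 1) - (1 - q) * q ^ m * (2 * y m - 1))"
    by (simp add: algebra_simps)
  also have "\<dots> = qubit_filter q x - qubit_filter q y"
    unfolding qubit_filter_def using assms by (intro suminf_diff[symmetric] summable_qubit_filter)
  finally show ?thesis ..
qed

lemma qubit_filters_separate:
  assumes "x \<in> K1" "y \<in> K1" "x \<noteq> y"
  obtains q where "q \<in> {0<..<1}" "qubit_filter q x \<noteq> qubit_filter q y"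
proof -
  obtain m where "x m - y m \<noteq> 0"
    using assms(3) by auto
  moreover have "\<bar>x m - y m\<bar> \<le> 1" for m
    using assms(1,2) by (rule K1_abs_diff_le_1)
  ultimately have "\<not> (\<forall>q. 0 < q \<longrightarrow> q < 1 \<longrightarrow> (\<Sum>m. (x m - y m) * q ^ m) = 0)"
    using bounded_powser_vanishing_imp_zero[of "\<lambda>m. x m - y m" 1] by blast
  then obtain q where q: "0 < q" "q < 1" "(\<Sum>m. (x m - y m) * q ^ m) \<noteq> 0"
    by blast
  then have "qubit_filter q x - qubit_filter q y \<noteq> 0"
    using qubit_filter_diff[of q x y] assms(1,2) by simp
  with q that show ?thesis
    by simp
qed

lemma function_ring_on_qubit_poly_filters: "function_ring_on qubit_poly_filters K1"
proof
  show "compact K1"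
    by (rule compact_K1)
  show "continuous_on K1 f" if "f \<in> qubit_poly_filters" for f
    using that continuous_on_qubit_poly_filter unfolding qubit_poly_filters_def by blast
  show "(\<lambda>v. f v + g v) \<in> qubit_poly_filters" "(\<lambda>v. f v * g v) \<in> qubit_poly_filters"
    if "f \<in> qubit_poly_filters" "g \<in> qubit_poly_filters" for f g
    using qubit_poly_filters_closed[OF that] by simp_all
  show "(\<lambda>_. a) \<in> qubit_poly_filters" for a
  proof -
    have "(\<lambda>_. a) = qubit_poly_filter 1 (\<lambda>_. 1 / 2) {\<lambda>_. 0} (\<lambda>_. a)"
      by (simp add: fun_eq_iff qubit_poly_filter_def poly_out_def)
    then show ?thesis
      unfolding qubit_poly_filters_def by force
  qed
  show "\<exists>f\<in>qubit_poly_filters. f x \<noteq> f y" if xy: "x \<in> K1" "y \<in> K1" "x \<noteq> y" for x y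
  proof -
    obtain q where q: "q \<in> {0<..<1}" "qubit_filter q x \<noteq> qubit_filter q y"
      using qubit_filters_separate[OF xy] .
    have "qubit_filter q = qubit_poly_filter 1 (\<lambda>_. q) {\<lambda>_. 1} (\<lambda>_. 1)"
      by (simp add: fun_eq_iff qubit_poly_filter_def poly_out_def)
    moreover have "qubit_poly_filter 1 (\<lambda>_. q) {\<lambda>_. 1} (\<lambda>_. 1) \<in> qubit_poly_filters"
      unfolding qubit_poly_filters_def using q(1) by force
    ultimately show ?thesis
      using q(2) by metis
  qed
qed

theorem proposition1:
  fixes w :: "nat \<Rightarrow> real" and f :: "(nat \<Rightarrow> real) \<Rightarrow> real"
  assumes "null_seq w" and "cont_w w f"
  shows "\<forall>e>0. \<exists>F\<in>FS. \<forall>v\<in>K1. \<bar>F v - f v\<bar> < e"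
proof (intro allI impI)
  fix e :: real
  assume "e > 0"
  moreover have "continuous_on K1 f"
    using assms by (rule continuous_on_K1_if_cont_w)
  ultimately obtain g where "g \<in> qubit_poly_filters" "\<forall>v\<in>K1. \<bar>f v - g v\<bar> < e"
    using function_ring_on.Stone_Weierstrass_basic[OF function_ring_on_qubit_poly_filters] by blast
  then show "\<exists>F\<in>FS. \<forall>v\<in>K1. \<bar>F v - f v\<bar> < e"
    using qubit_poly_filters_subset_FS by (intro bexI[of _ g]) (auto simp: abs_minus_commute)
qed

end
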